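(* The function $y\mapsto h(e^{y})$ is concave on the interval $(-\infty,\ln(1/2)]$.
   Context: $h(t)=(1-t)\left[\psi-\left(\frac{t}{1-t}\right)^{\chi}\right]$ for $t\in[0,1/2]$, with $\psi=13/10$ and $\chi=1/2$. *)

theory Defs
  imports "HOL-Analysis.Analysis"
begin

definition psi :: real where "psi = 13/10"
definition chi :: real where "chi = 1/2"

definition h :: "real \<Rightarrow> real" where
  "h t = (1 - t) * (psi - (t / (1 - t)) powr chi)"

end

theory Submission
  imports Defs
begin

text \<open>For \<open>t = e\<^sup>y \<le> 1/2\<close> we have \<open>h t = \<psi>(1 - t) - \<surd>(t - t\<^sup>2)\<close>, so it suffices to show that
  the second derivative in \<open>y\<close>, namely \<open>-\<psi> t - t\<^sup>2(1 - 6t + 4t\<^sup>2)/(4r\<^sup>3)\<close> with \<open>r = \<surd>(t - t\<^sup>2)\<close>,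
  is nonpositive. Up to a positive factor it equals \<open>-(1 - 6t + 4t\<^sup>2 + 4\<psi>(1 - t)r)\<close>, and since
  \<open>r \<ge> t\<close> and \<open>4\<psi>(1 - t) \<ge> 2\<close>, the bracket is at least \<open>(1 - 2t)\<^sup>2 \<ge> 0\<close>; any \<open>\<psi> \<ge> 1\<close> works.\<close>

lemma concave_on_transform:
  assumes f: "concave_on S f" and eq: "\<And>x. x \<in> S \<Longrightarrow> f x = g x"
  shows "concave_on S g"
  unfolding concave_on_iff
proof (intro conjI ballI allI impI)
  show "convex S"
    using f by (simp add: concave_on_iff)
  fix x y and u v :: real
  assume xy: "x \<in> S" "y \<in> S" and uv: "0 \<le> u" "0 \<le> v" "u + v = 1"
  then have "u *\<^sub>R x + v *\<^sub>R y \<in> S"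
    using \<open>convex S\<close> by (simp add: convexD)
  moreover have "u * f x + v * f y \<le> f (u *\<^sub>R x + v *\<^sub>R y)"
    using f xy uv unfolding concave_on_iff by blast
  ultimately show "u * g x + v * g y \<le> g (u *\<^sub>R x + v *\<^sub>R y)"
    using xy by (simp add: eq)
qed

lemma h_eq_sqrt:
  assumes "0 \<le> t" "t < 1"
  shows "h t = psi * (1 - t) - sqrt (t - t\<^sup>2)"
proof -
  have "(t / (1 - t)) powr chi = sqrt (t / (1 - t))"
    unfolding chi_def using assms by (intro powr_half_sqrt) simp
  moreover have "t - t\<^sup>2 = (1 - t)\<^sup>2 * (t / (1 - t))"
    using assms by (simp add: field_simps power2_eq_square)
  then have "sqrt (t - t\<^sup>2) = (1 - t) * sqrt (t / (1 - t))"
    using assms by (simp only: real_sqrt_mult real_sqrt_abs)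
  ultimately show ?thesis
    unfolding h_def by (simp add: algebra_simps)
qed

lemma DERIV_sqrt_exp_diff_sq:
  assumes "y < 0"
  shows "((\<lambda>y. sqrt (exp y - (exp y)\<^sup>2)) has_real_derivative
           (exp y - 2 * (exp y)\<^sup>2) / (2 * sqrt (exp y - (exp y)\<^sup>2))) (at y)"
proof -
  have pos: "0 < exp y - (exp y)\<^sup>2"
    using assms by (simp add: power2_eq_square)
  have "((\<lambda>y. exp y - (exp y)\<^sup>2) has_real_derivative exp y - 2 * (exp y)\<^sup>2) (at y)"
    by (auto intro!: derivative_eq_intros simp: power2_eq_square)
  from DERIV_chain2[OF DERIV_real_sqrt[OF pos] this] show ?thesis
    by (simp add: field_simps)
qed

lemma DERIV_deriv_sqrt_exp_diff_sq:
  assumes "y < 0"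
  shows "((\<lambda>y. (exp y - 2 * (exp y)\<^sup>2) / (2 * sqrt (exp y - (exp y)\<^sup>2))) has_real_derivative
           (exp y)\<^sup>2 * (1 - 6 * exp y + 4 * (exp y)\<^sup>2) / (4 * sqrt (exp y - (exp y)\<^sup>2) ^ 3)) (at y)"
proof -
  define u r where "u = exp y" and "r = sqrt (exp y - (exp y)\<^sup>2)"
  have r_pos: "0 < r" and r_sq: "r\<^sup>2 = u - u\<^sup>2"
    using assms by (simp_all add: u_def r_def power2_eq_square)
  have "((\<lambda>y. exp y - 2 * (exp y)\<^sup>2) has_real_derivative u - 4 * u\<^sup>2) (at y)"
    unfolding u_def by (auto intro!: derivative_eq_intros simp: power2_eq_square)
  moreover have "((\<lambda>y. 2 * sqrt (exp y - (exp y)\<^sup>2)) has_real_derivative 2 * ((u - 2 * u\<^sup>2) / (2 * r))) (at y)"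
    unfolding u_def r_def by (rule DERIV_cmult[OF DERIV_sqrt_exp_diff_sq[OF assms]])
  moreover have "2 * sqrt (exp y - (exp y)\<^sup>2) \<noteq> 0"
    using r_pos by (simp add: r_def)
  ultimately have quotient_rule: "((\<lambda>y. (exp y - 2 * (exp y)\<^sup>2) / (2 * sqrt (exp y - (exp y)\<^sup>2))) has_real_derivative
      ((u - 4 * u\<^sup>2) * (2 * r) - (u - 2 * u\<^sup>2) * (2 * ((u - 2 * u\<^sup>2) / (2 * r)))) / (2 * r * (2 * r))) (at y)"
    unfolding u_def r_def by (rule DERIV_divide)
  have "((u - 4 * u\<^sup>2) * (2 * r) - (u - 2 * u\<^sup>2) * (2 * ((u - 2 * u\<^sup>2) / (2 * r)))) / (2 * r * (2 * r))
      = (2 * (u - 4 * u\<^sup>2) * r\<^sup>2 - (u - 2 * u\<^sup>2)\<^sup>2) / (4 * r ^ 3)"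
    using r_pos by (simp add: field_simps power2_eq_square power3_eq_cube)
  also have "\<dots> = u\<^sup>2 * (1 - 6 * u + 4 * u\<^sup>2) / (4 * r ^ 3)"
    unfolding r_sq by (simp add: algebra_simps power2_eq_square)
  finally show ?thesis
    using quotient_rule unfolding u_def r_def by simp
qed

lemma poly_plus_sqrt_nonneg:
  fixes c u :: real
  assumes "1 \<le> c" "0 < u" "u \<le> 1/2"
  shows "0 \<le> 1 - 6 * u + 4 * u\<^sup>2 + 4 * c * (1 - u) * sqrt (u - u\<^sup>2)"
proof -
  have "u \<le> sqrt (u - u\<^sup>2)"
    using assms by (intro real_le_rsqrt) (simp add: power2_eq_square)
  moreover have "1 * (1/2) \<le> c * (1 - u)"
    using assms by (intro mult_mono) auto
  ultimately have "2 * u \<le> 4 * c * (1 - u) * sqrt (u - u\<^sup>2)"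
    using assms by (simp add: mult_mono)
  moreover have "0 \<le> (1 - 2 * u)\<^sup>2"
    by simp
  ultimately show ?thesis
    by (simp add: power2_eq_square algebra_simps)
qed

lemma concave_on_exp_minus_sqrt:
  fixes c :: real
  assumes "1 \<le> c"
  shows "concave_on {..ln (1/2)} (\<lambda>y. c * (1 - exp y) - sqrt (exp y - (exp y)\<^sup>2))"
proof (rule f''_le0_imp_concave)
  fix y :: real
  assume "y \<in> {..ln (1/2)}"
  moreover have "ln (1/2) < (0::real)"
    by (rule ln_less_zero) auto
  ultimately have "y < 0"
    unfolding atMost_iff by linarith
  show "((\<lambda>y. c * (1 - exp y) - sqrt (exp y - (exp y)\<^sup>2)) has_real_derivative
          - c * exp y - (exp y - 2 * (exp y)\<^sup>2) / (2 * sqrt (exp y - (exp y)\<^sup>2))) (at y)"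
    by (rule DERIV_diff[OF _ DERIV_sqrt_exp_diff_sq[OF \<open>y < 0\<close>]])
      (auto intro!: derivative_eq_intros)
  show "((\<lambda>y. - c * exp y - (exp y - 2 * (exp y)\<^sup>2) / (2 * sqrt (exp y - (exp y)\<^sup>2)))
          has_real_derivative - c * exp y - (exp y)\<^sup>2 * (1 - 6 * exp y + 4 * (exp y)\<^sup>2) /
            (4 * sqrt (exp y - (exp y)\<^sup>2) ^ 3)) (at y)"
    by (rule DERIV_diff[OF _ DERIV_deriv_sqrt_exp_diff_sq[OF \<open>y < 0\<close>]])
      (auto intro!: derivative_eq_intros)
  show "- c * exp y - (exp y)\<^sup>2 * (1 - 6 * exp y + 4 * (exp y)\<^sup>2) /
          (4 * sqrt (exp y - (exp y)\<^sup>2) ^ 3) \<le> 0"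
  proof -
    define u where "u = exp y"
    define r where "r = sqrt (u - u\<^sup>2)"
    have u: "0 < u" "u \<le> 1/2"
      using \<open>y \<in> {..ln (1/2)}\<close> by (simp_all add: u_def ln_ge_iff)
    then have r_pos: "0 < r" and r_cube: "r ^ 3 = u * (1 - u) * r"
      by (simp_all add: r_def power2_eq_square power3_eq_cube algebra_simps)
    have "- c * u - u\<^sup>2 * (1 - 6 * u + 4 * u\<^sup>2) / (4 * r ^ 3)
        = - u / (4 * (1 - u) * r) * (1 - 6 * u + 4 * u\<^sup>2 + 4 * c * (1 - u) * r)"
      using u r_pos unfolding r_cube by (simp add: field_simps power2_eq_square)
    also have "\<dots> \<le> 0"
      using u r_pos poly_plus_sqrt_nonneg[OF assms u, folded r_def]
      by (intro mult_nonpos_nonneg) simp_all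
    finally show ?thesis
      by (simp add: u_def r_def)
  qed
qed simp

theorem lemma45:
  shows "concave_on {..ln (1/2)} (\<lambda>y. h (exp y))"
proof -
  have h_exp: "h (exp y) = psi * (1 - exp y) - sqrt (exp y - (exp y)\<^sup>2)" if "y \<in> {..ln (1/2)}" for y
  proof (rule h_eq_sqrt)
    show "exp y < 1"
      using that by (simp add: ln_ge_iff del: exp_less_one_iff)
  qed simp
  have "concave_on {..ln (1/2)} (\<lambda>y. psi * (1 - exp y) - sqrt (exp y - (exp y)\<^sup>2))"
    by (rule concave_on_exp_minus_sqrt) (simp add: psi_def)
  then show ?thesis
    by (rule concave_on_transform) (simp add: h_exp)
qed

end
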